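(* Let $\theta>0$. Let $X_1,\ldots,X_n$ be independent random variables with $P(X_i>x)=(1+x/\theta)^{-\alpha_i}$, $x>0$, $\alpha_i>0$, and $Y_1,\ldots,Y_n$ independent random variables with $P(Y_i>x)=(1+x/\theta)^{-\alpha_i^*}$, $x>0$, $\alpha_i^*>0$. Let $\underline{\alpha}=(\alpha_1,\ldots,\alpha_n)$ and $\underline{\alpha}^*=(\alpha_1^*,\ldots,\alpha_n^* )$. If $\underline{\alpha}\prec^{w}\underline{\alpha}^*$, then $X_{n:n}\leq_{rh}Y_{n:n}$.
   Context: $X_{n:n}=\max(X_1,\ldots,X_n)$. Weak supermajorization: $\underline{a}\prec^{w}\underline{b}$ means $\sum_{i=1}^k a_{i:n}\geq\sum_{i=1}^k b_{i:n}$ for all $k=1,\ldots,n$, where $a_{1:n}\leq\cdots\leq a_{n:n}$ is the increasing rearrangement of $\underline a$ (similarly for $\underline b$). $X\leq_{rh}Y$ (reversed hazard rate order) for $X\sim F$, $Y\sim G$ means $G(x)/F(x)$ is increasing in $x$ (equivalently $f/F\leq g/G$). *)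

theory Defs
  imports "HOL-Probability.Probability"
begin

text \<open>Increasing rearrangement of the vector (a 0, ..., a (n-1)) as a sorted list;
  its (k-1)-th entry is a_{k:n}.\<close>
definition incr_rearr :: "nat \<Rightarrow> (nat \<Rightarrow> real) \<Rightarrow> real list" where
  "incr_rearr n a = sort (map a [0..<n])"

definition weak_supmaj :: "nat \<Rightarrow> (nat \<Rightarrow> real) \<Rightarrow> (nat \<Rightarrow> real) \<Rightarrow> bool" where
  "weak_supmaj n a b \<longleftrightarrow>
     (\<forall>k\<in>{1..n}. sum_list (take k (incr_rearr n a)) \<ge> sum_list (take k (incr_rearr n b)))"

definition cdf_of :: "'a measure \<Rightarrow> ('a \<Rightarrow> real) \<Rightarrow> real \<Rightarrow> real" where
  "cdf_of M Z x = measure M {\<omega> \<in> space M. Z \<omega> \<le> x}"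

definition rh_le :: "'a measure \<Rightarrow> ('a \<Rightarrow> real) \<Rightarrow> 'b measure \<Rightarrow> ('b \<Rightarrow> real) \<Rightarrow> bool" where
  "rh_le M X N Y \<longleftrightarrow>
     mono_on {x. 0 < cdf_of M X x \<and> 0 < cdf_of N Y x} (\<lambda>x. cdf_of N Y x / cdf_of M X x)"

definition max_os :: "nat \<Rightarrow> (nat \<Rightarrow> 'a \<Rightarrow> real) \<Rightarrow> 'a \<Rightarrow> real" where
  "max_os n X \<omega> = Max ((\<lambda>i. X i \<omega>) ` {..<n})"

end

theory Submission
  imports Defs
begin

(* With t = ln (1 + x / \<theta>), the distribution function of X_{n:n} at x > 0 is
   \<Prod>i. 1 - e^(-\<alpha>_i t), so the t-derivative of ln (G / F) is
   (\<Sum>i. h (\<alpha>*_i t) - \<Sum>i. h (\<alpha>_i t)) / t with h u = u / (e^u - 1).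
   Since h is decreasing and convex on (0, \<infinity>), this is nonnegative under weak
   supermajorization: the tangent inequality at the sorted \<alpha>_(i) followed by Abel
   summation against the nonnegative partial sums of \<alpha>_(i) - \<alpha>*_(i). *)

lemma sum_mult_le_last_mult_sum:
  fixes c d :: "nat \<Rightarrow> 'a::linordered_idom"
  assumes "\<And>i. i < m \<Longrightarrow> c i \<le> c (Suc i)"
    and "\<And>k. k \<le> Suc m \<Longrightarrow> 0 \<le> (\<Sum>i<k. d i)"
  shows "(\<Sum>i<Suc m. c i * d i) \<le> c m * (\<Sum>i<Suc m. d i)"
  using assms
proof (induction m)
  case 0
  then show ?case by simp
next
  case (Suc m)
  have "(\<Sum>i<Suc m. c i * d i) \<le> c m * (\<Sum>i<Suc m. d i)"
    using Suc.prems by (intro Suc.IH) auto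
  also have "\<dots> \<le> c (Suc m) * (\<Sum>i<Suc m. d i)"
    using Suc.prems(1)[of m] Suc.prems(2)[of "Suc m"] by (intro mult_right_mono) auto
  finally show ?case by (simp add: algebra_simps)
qed

lemma length_incr_rearr [simp]: "length (incr_rearr n a) = n"
  by (simp add: incr_rearr_def)

lemma incr_rearr_nth_mem: "i < n \<Longrightarrow> incr_rearr n a ! i \<in> a ` {..<n}"
  using nth_mem[of i "incr_rearr n a"] by (simp add: incr_rearr_def atLeast0LessThan)

lemma incr_rearr_nth_mono: "i \<le> j \<Longrightarrow> j < n \<Longrightarrow> incr_rearr n a ! i \<le> incr_rearr n a ! j"
  unfolding incr_rearr_def by (intro sorted_nth_mono) auto

lemma sum_incr_rearr: "(\<Sum>i<n. f (incr_rearr n a ! i)) = (\<Sum>i<n. f (a i))"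
proof -
  have "(\<Sum>i<n. f (incr_rearr n a ! i)) = sum_list (map f (incr_rearr n a))"
    by (simp add: sum_list_sum_nth atLeast0LessThan)
  also have "\<dots> = sum_list (map f (map a [0..<n]))"
    by (simp only: incr_rearr_def mset_map mset_sort flip: sum_mset_sum_list)
  also have "\<dots> = (\<Sum>i<n. f (a i))"
    by (simp add: sum_list_sum_nth atLeast0LessThan)
  finally show ?thesis .
qed

lemma weak_supmaj_partial_sums_nonneg:
  assumes "weak_supmaj n a b" "k \<le> n"
  shows "0 \<le> (\<Sum>i<k. incr_rearr n a ! i - incr_rearr n b ! i)"
proof (cases "k = 0")
  case False
  have take_eq: "sum_list (take k (incr_rearr n c)) = (\<Sum>i<k. incr_rearr n c ! i)" for c
    using \<open>k \<le> n\<close> by (simp add: sum_list_sum_nth atLeast0LessThan min_def)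
  from False assms have "sum_list (take k (incr_rearr n b)) \<le> sum_list (take k (incr_rearr n a))"
    unfolding weak_supmaj_def by simp
  then show ?thesis
    by (simp add: take_eq sum_subtractf)
qed simp

lemma sum_le_sum_if_weak_supmaj:
  fixes \<phi> \<phi>' :: "real \<Rightarrow> real" and I :: "real set"
  assumes maj: "weak_supmaj n a b"
    and I: "open I" "connected I" "\<And>i. i < n \<Longrightarrow> a i \<in> I" "\<And>i. i < n \<Longrightarrow> b i \<in> I"
    and deriv: "\<And>x. x \<in> I \<Longrightarrow> (\<phi> has_real_derivative \<phi>' x) (at x)"
    and mono: "mono_on I \<phi>'" and nonpos: "\<And>x. x \<in> I \<Longrightarrow> \<phi>' x \<le> 0"
  shows "(\<Sum>i<n. \<phi> (a i)) \<le> (\<Sum>i<n. \<phi> (b i))"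
proof (cases n)
  case (Suc m)
  define A B where "A = incr_rearr n a" and "B = incr_rearr n b"
  have AB_in: "A ! i \<in> I" "B ! i \<in> I" if "i < n" for i
    using incr_rearr_nth_mem[OF that, of a] incr_rearr_nth_mem[OF that, of b] I(3,4)
    unfolding A_def B_def by auto
  have convex: "convex_on I \<phi>"
    using I(2) deriv by (rule convex_on_realI[where f' = \<phi>']) (auto dest: mono_onD[OF mono])
  have tangent: "\<phi>' (A ! i) * (B ! i - A ! i) \<le> \<phi> (B ! i) - \<phi> (A ! i)" if "i < n" for i
    using AB_in[OF that] I(1)
    by (intro convex_on_imp_above_tangent[OF convex I(2)])
       (auto simp: interior_open intro: has_field_derivative_at_within deriv)
  have "(\<Sum>i<n. \<phi> (A ! i) - \<phi> (B ! i)) \<le> (\<Sum>i<n. \<phi>' (A ! i) * (A ! i - B ! i))"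
    using tangent by (intro sum_mono) (auto simp: algebra_simps)
  also have "\<dots> \<le> \<phi>' (A ! m) * (\<Sum>i<n. A ! i - B ! i)"
    unfolding Suc
  proof (rule sum_mult_le_last_mult_sum)
    show "\<phi>' (A ! i) \<le> \<phi>' (A ! Suc i)" if "i < m" for i
      using that Suc AB_in[of i] AB_in[of "Suc i"] incr_rearr_nth_mono[of i "Suc i" n a]
      by (intro mono_onD[OF mono]) (auto simp: A_def)
    show "0 \<le> (\<Sum>i<k. A ! i - B ! i)" if "k \<le> Suc m" for k
      using weak_supmaj_partial_sums_nonneg[OF maj] that Suc by (simp add: A_def B_def)
  qed
  also have "\<dots> \<le> 0"
    using nonpos[OF AB_in(1)] weak_supmaj_partial_sums_nonneg[OF maj order.refl] Suc
    by (intro mult_nonpos_nonneg) (auto simp: A_def B_def)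
  finally show ?thesis
    using sum_incr_rearr[of \<phi> n a] sum_incr_rearr[of \<phi> n b]
    by (simp add: sum_subtractf A_def B_def)
qed simp

lemma exp_mult_one_minus_le_one: "exp u * (1 - u) \<le> (1::real)"
proof -
  have "exp u * (1 - u) \<le> exp u * exp (- u)"
    using exp_ge_add_one_self[of "- u"] by (intro mult_left_mono) auto
  then show ?thesis by (simp add: exp_minus)
qed

lemma exp_mult_sub_two_add_two_nonneg:
  fixes u :: real assumes "0 \<le> u"
  shows "0 \<le> exp u * (u - 2) + u + 2"
proof -
  have "exp 0 * (0 - 2) + 0 + 2 \<le> exp u * (u - 2) + u + 2"
  proof (rule DERIV_nonneg_imp_nondecreasing[OF assms])
    fix x :: real
    have "DERIV (\<lambda>x. exp x * (x - 2) + x + 2) x :> 1 - exp x * (1 - x)"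
      by (auto intro!: derivative_eq_intros simp: algebra_simps)
    then show "\<exists>y. DERIV (\<lambda>x. exp x * (x - 2) + x + 2) x :> y \<and> 0 \<le> y"
      using exp_mult_one_minus_le_one[of x] by force
  qed
  then show ?thesis by simp
qed

definition u_over_expm1 :: "real \<Rightarrow> real" where
  "u_over_expm1 u = u / (exp u - 1)"

definition u_over_expm1_deriv :: "real \<Rightarrow> real" where
  "u_over_expm1_deriv u = (exp u - 1 - u * exp u) / (exp u - 1)\<^sup>2"

lemma has_real_derivative_u_over_expm1:
  assumes "u \<noteq> 0"
  shows "(u_over_expm1 has_real_derivative u_over_expm1_deriv u) (at u)"
proof -
  have "exp u \<noteq> 1" using assms by simp
  then show ?thesis
    unfolding u_over_expm1_def u_over_expm1_deriv_def
    by (auto intro!: derivative_eq_intros simp: power2_eq_square algebra_simps)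
qed

lemma u_over_expm1_deriv_nonpos: "u_over_expm1_deriv u \<le> 0"
  unfolding u_over_expm1_deriv_def
  using exp_mult_one_minus_le_one[of u] by (intro divide_nonpos_nonneg) (auto simp: algebra_simps)

lemma has_real_derivative_u_over_expm1_deriv:
  assumes "u \<noteq> 0"
  shows "(u_over_expm1_deriv has_real_derivative
           exp u * (exp u * (u - 2) + u + 2) / (exp u - 1) ^ 3) (at u)"
proof -
  have "exp u - 1 \<noteq> 0" using assms by simp
  then have "((exp u - (exp u + u * exp u)) * (exp u - 1)\<^sup>2
        - (exp u - 1 - u * exp u) * (2 * (exp u - 1) * exp u)) / ((exp u - 1)\<^sup>2)\<^sup>2
      = exp u * (exp u * (u - 2) + u + 2) / (exp u - 1) ^ 3"
    by (simp add: divide_simps) algebra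
  moreover have "(u_over_expm1_deriv has_real_derivative
      ((exp u - (exp u + u * exp u)) * (exp u - 1)\<^sup>2
        - (exp u - 1 - u * exp u) * (2 * (exp u - 1) * exp u)) / ((exp u - 1)\<^sup>2)\<^sup>2) (at u)"
    unfolding u_over_expm1_deriv_def using \<open>exp u - 1 \<noteq> 0\<close>
    by (auto intro!: derivative_eq_intros)
  ultimately show ?thesis by simp
qed

lemma mono_on_u_over_expm1_deriv: "mono_on {0<..} u_over_expm1_deriv"
proof (rule mono_onI)
  fix u v :: real assume "u \<in> {0<..}" "v \<in> {0<..}" "u \<le> v"
  then show "u_over_expm1_deriv u \<le> u_over_expm1_deriv v"
  proof (intro DERIV_nonneg_imp_nondecreasing[OF \<open>u \<le> v\<close>] exI conjI)
    fix x assume "u \<le> x" "x \<le> v"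
    with \<open>u \<in> {0<..}\<close> have "0 < x" by simp
    then show "(u_over_expm1_deriv has_real_derivative
        exp x * (exp x * (x - 2) + x + 2) / (exp x - 1) ^ 3) (at x)"
      by (intro has_real_derivative_u_over_expm1_deriv) simp
    show "0 \<le> exp x * (exp x * (x - 2) + x + 2) / (exp x - 1) ^ 3"
      using \<open>0 < x\<close> exp_mult_sub_two_add_two_nonneg[of x] by simp
  qed
qed

lemma has_real_derivative_ln_one_minus_exp:
  fixes c t :: real assumes "0 < c" "0 < t"
  shows "((\<lambda>t. ln (1 - exp (- (c * t)))) has_real_derivative u_over_expm1 (c * t) / t) (at t)"
proof -
  have "exp (c * t) > 1" using assms by simp
  then have "c * exp (- (c * t)) / (1 - exp (- (c * t))) = u_over_expm1 (c * t) / t"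
    using \<open>0 < t\<close> by (simp add: u_over_expm1_def exp_minus divide_simps)
  moreover have "((\<lambda>t. ln (1 - exp (- (c * t)))) has_real_derivative
      c * exp (- (c * t)) / (1 - exp (- (c * t)))) (at t)"
    using \<open>exp (c * t) > 1\<close> by (auto intro!: derivative_eq_intros simp: exp_minus field_simps)
  ultimately show ?thesis by simp
qed

lemma sum_u_over_expm1_le_if_weak_supmaj:
  assumes "weak_supmaj n a b" "\<And>i. i < n \<Longrightarrow> 0 < a i" "\<And>i. i < n \<Longrightarrow> 0 < b i" "0 < t"
  shows "(\<Sum>i<n. u_over_expm1 (a i * t)) \<le> (\<Sum>i<n. u_over_expm1 (b i * t))"
proof (rule sum_le_sum_if_weak_supmaj[where I = "{0<..}"
    and \<phi> = "\<lambda>s. u_over_expm1 (s * t)" and \<phi>' = "\<lambda>s. u_over_expm1_deriv (s * t) * t"])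
  show "((\<lambda>s. u_over_expm1 (s * t)) has_real_derivative u_over_expm1_deriv (x * t) * t) (at x)"
    if "x \<in> {0<..}" for x
    using that \<open>0 < t\<close>
    by (auto intro!: derivative_eq_intros DERIV_chain2[OF has_real_derivative_u_over_expm1])
  show "mono_on {0<..} (\<lambda>s. u_over_expm1_deriv (s * t) * t)"
    using \<open>0 < t\<close> by (auto intro!: mono_onI mult_right_mono mono_onD[OF mono_on_u_over_expm1_deriv])
  show "u_over_expm1_deriv (x * t) * t \<le> 0" for x
    using \<open>0 < t\<close> u_over_expm1_deriv_nonpos by (simp add: mult_nonpos_nonneg)
qed (use assms in auto)

lemma prod_one_minus_exp_ratio_mono:
  assumes maj: "weak_supmaj n a b"
    and pos: "\<And>i. i < n \<Longrightarrow> 0 < a i" "\<And>i. i < n \<Longrightarrow> 0 < b i"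
    and "0 < s" "s \<le> t"
  shows "(\<Prod>i<n. 1 - exp (- (b i * s))) / (\<Prod>i<n. 1 - exp (- (a i * s)))
       \<le> (\<Prod>i<n. 1 - exp (- (b i * t))) / (\<Prod>i<n. 1 - exp (- (a i * t)))"
proof -
  define L where "L x = (\<Sum>i<n. ln (1 - exp (- (b i * x)))) - (\<Sum>i<n. ln (1 - exp (- (a i * x))))"
    for x
  have factor_pos: "0 < 1 - exp (- (c * x))" if "0 < c" "0 < x" for c x :: real
    using that by simp
  have ratio_eq: "(\<Prod>i<n. 1 - exp (- (b i * x))) / (\<Prod>i<n. 1 - exp (- (a i * x))) = exp (L x)"
    if "0 < x" for x
    using that pos unfolding L_def exp_diff exp_sum[OF finite_lessThan]
    by (simp add: exp_ln factor_pos)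
  have "L s \<le> L t"
  proof (rule DERIV_nonneg_imp_nondecreasing[OF \<open>s \<le> t\<close>])
    fix x assume "s \<le> x"
    with \<open>0 < s\<close> have "0 < x" by simp
    have "(L has_real_derivative
        (\<Sum>i<n. u_over_expm1 (b i * x) / x) - (\<Sum>i<n. u_over_expm1 (a i * x) / x)) (at x)"
      unfolding L_def using \<open>0 < x\<close> pos
      by (auto intro!: derivative_intros has_real_derivative_ln_one_minus_exp)
    moreover have "0 \<le> (\<Sum>i<n. u_over_expm1 (b i * x) / x) - (\<Sum>i<n. u_over_expm1 (a i * x) / x)"
      using sum_u_over_expm1_le_if_weak_supmaj[OF maj pos \<open>0 < x\<close>] \<open>0 < x\<close>
      by (simp add: divide_right_mono flip: sum_divide_distrib)
    ultimately show "\<exists>y. (L has_real_derivative y) (at x) \<and> 0 \<le> y" by blast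
  qed
  then show ?thesis
    using \<open>0 < s\<close> \<open>s \<le> t\<close> by (simp add: ratio_eq)
qed

lemma cdf_of_max_os_indep:
  assumes "prob_space M" "prob_space.indep_vars M (\<lambda>_. borel) X {..<n}" "0 < n"
  shows "cdf_of M (max_os n X) x = (\<Prod>i<n. cdf_of M (X i) x)"
proof -
  interpret prob_space M by fact
  have "{..<n} \<noteq> {}" using \<open>0 < n\<close> by auto
  then have "{\<omega> \<in> space M. max_os n X \<omega> \<le> x} = (\<Inter>i<n. {\<omega> \<in> space M. X i \<omega> \<le> x})"
    by (auto simp: max_os_def Max_le_iff)
  moreover have "indep_events (\<lambda>i. {\<omega> \<in> space M. X i \<omega> \<le> x}) {..<n}"
    using assms(2) by (rule indep_eventsI_indep_vars) simp
  ultimately show ?thesis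
    using \<open>{..<n} \<noteq> {}\<close> by (simp add: cdf_of_def indep_events_def)
qed

lemma cdf_of_lomax:
  assumes "prob_space M" "Z \<in> borel_measurable M" "0 < \<theta>"
    and tail: "\<And>x. 0 < x \<Longrightarrow> measure M {\<omega> \<in> space M. Z \<omega> > x} = (1 + x / \<theta>) powr (- \<alpha>)"
  shows "cdf_of M Z x = (if x \<le> 0 then 0 else 1 - (1 + x / \<theta>) powr (- \<alpha>))"
proof -
  interpret prob_space M by fact
  have pos_cdf: "cdf_of M Z y = 1 - (1 + y / \<theta>) powr (- \<alpha>)" if "0 < y" for y
  proof -
    have "{\<omega> \<in> space M. Z \<omega> \<le> y} = space M - {\<omega> \<in> space M. Z \<omega> > y}" by auto
    moreover have "{\<omega> \<in> space M. Z \<omega> > y} \<in> events" using assms(2) by measurable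
    ultimately show ?thesis by (simp add: cdf_of_def prob_compl tail[OF that])
  qed
  have "cdf_of M Z x = 0" if "x \<le> 0"
  proof -
    have "((\<lambda>y. 1 - (1 + y / \<theta>) powr (- \<alpha>)) \<longlongrightarrow> 1 - (1 + 0 / \<theta>) powr (- \<alpha>)) (at_right 0)"
      using \<open>0 < \<theta>\<close> by (intro tendsto_intros) auto
    moreover have "\<forall>\<^sub>F y in at_right 0. 1 - (1 + y / \<theta>) powr (- \<alpha>) = cdf_of M Z y"
      by (rule eventually_at_rightI[of 0 1]) (simp_all add: pos_cdf)
    ultimately have lim: "((\<lambda>y. cdf_of M Z y) \<longlongrightarrow> 0) (at_right 0)"
      by (simp add: Lim_transform_eventually)
    have "cdf_of M Z x \<le> cdf_of M Z y" if "0 < y" for y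
      unfolding cdf_of_def using \<open>x \<le> 0\<close> that assms(2)
      by (intro finite_measure_mono) (auto, measurable)
    then have "cdf_of M Z x \<le> 0"
      by (intro tendsto_lowerbound[OF lim] eventually_at_rightI[of 0 1]) auto
    then show ?thesis by (simp add: cdf_of_def antisym)
  qed
  with pos_cdf show ?thesis by simp
qed

lemma cdf_of_max_os_lomax:
  assumes "prob_space M" and indep: "prob_space.indep_vars M (\<lambda>_. borel) X {..<n}"
    and "0 < n" "0 < \<theta>"
    and tail: "\<And>i x. i < n \<Longrightarrow> 0 < x \<Longrightarrow>
      measure M {\<omega> \<in> space M. X i \<omega> > x} = (1 + x / \<theta>) powr (- \<alpha> i)"
  shows "cdf_of M (max_os n X) x =
    (if x \<le> 0 then 0 else \<Prod>i<n. 1 - exp (- (\<alpha> i * ln (1 + x / \<theta>))))"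
proof -
  have "X i \<in> borel_measurable M" if "i < n" for i
    using indep that by (simp add: prob_space.indep_vars_def2[OF \<open>prob_space M\<close>])
  then have cdf_X: "cdf_of M (X i) x = (if x \<le> 0 then 0 else 1 - (1 + x / \<theta>) powr (- \<alpha> i))"
    if "i < n" for i
    using that \<open>0 < \<theta>\<close> by (intro cdf_of_lomax[OF \<open>prob_space M\<close>] tail) auto
  have "0 < 1 + x / \<theta>" if "0 < x"
    using that \<open>0 < \<theta>\<close> by (simp add: add_pos_pos)
  then show ?thesis
    using \<open>0 < n\<close>
    by (auto simp: cdf_of_max_os_indep[OF \<open>prob_space M\<close> indep] cdf_X powr_def
        intro!: prod.cong)
qed

theorem theorem6:
  fixes M :: "'a measure" and N :: "'b measure"
    and X :: "nat \<Rightarrow> 'a \<Rightarrow> real" and Y :: "nat \<Rightarrow> 'b \<Rightarrow> real"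
    and \<alpha> \<alpha>s :: "nat \<Rightarrow> real" and \<theta> :: real and n :: nat
  assumes "n \<ge> 1" and "\<theta> > 0"
    and "prob_space M" and "prob_space N"
    and "prob_space.indep_vars M (\<lambda>_. borel) X {..<n}"
    and "prob_space.indep_vars N (\<lambda>_. borel) Y {..<n}"
    and "\<And>i. i < n \<Longrightarrow> \<alpha> i > 0" and "\<And>i. i < n \<Longrightarrow> \<alpha>s i > 0"
    and "\<And>i x. i < n \<Longrightarrow> x > 0 \<Longrightarrow>
           measure M {\<omega> \<in> space M. X i \<omega> > x} = (1 + x / \<theta>) powr (- \<alpha> i)"
    and "\<And>i x. i < n \<Longrightarrow> x > 0 \<Longrightarrow>
           measure N {\<omega> \<in> space N. Y i \<omega> > x} = (1 + x / \<theta>) powr (- \<alpha>s i)"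
    and "weak_supmaj n \<alpha> \<alpha>s"
  shows "rh_le M (max_os n X) N (max_os n Y)"
proof -
  have "0 < n" using \<open>n \<ge> 1\<close> by simp
  note cdf_X = cdf_of_max_os_lomax[OF assms(3,5) \<open>0 < n\<close> assms(2,9)]
  note cdf_Y = cdf_of_max_os_lomax[OF assms(4,6) \<open>0 < n\<close> assms(2,10)]
  show ?thesis
    unfolding rh_le_def
  proof (rule mono_onI)
    fix x y assume "x \<in> {x. 0 < cdf_of M (max_os n X) x \<and> 0 < cdf_of N (max_os n Y) x}" "x \<le> y"
    then have "0 < x" "0 < y" by (auto simp: cdf_X split: if_splits)
    then have "0 < ln (1 + x / \<theta>)" "ln (1 + x / \<theta>) \<le> ln (1 + y / \<theta>)"
      using \<open>x \<le> y\<close> \<open>\<theta> > 0\<close> by (simp_all add: add_pos_pos divide_right_mono)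
    from prod_one_minus_exp_ratio_mono[OF assms(11,7,8) this]
    show "cdf_of N (max_os n Y) x / cdf_of M (max_os n X) x
        \<le> cdf_of N (max_os n Y) y / cdf_of M (max_os n X) y"
      using \<open>0 < x\<close> \<open>0 < y\<close> by (simp add: cdf_X cdf_Y)
  qed
qed

end
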